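(* Let $\mathcal T=(T(t))_{t\ge0}$ be a $C_0$-semigroup on a Hilbert space $H$, and assume there exists $t'>0$ such that $T(t')$ is bounded from below. Then: (i) $\mathcal T$ is similar to a semigroup of contractions (i.e. $\|RT(t)R^{-1}\|\le1$ for all $t\ge0$ for some invertible $R\in\mathcal L(H)$) if and only if there exists $\tau>0$ such that $T(\tau)$ is similar to a contraction; (ii) $\mathcal T$ is similar to a quasi-contraction semigroup, i.e. there exist an invertible $R\in\mathcal L(H)$ and $\lambda\in\mathbb R$ with $\|RT(t)R^{-1}\|\le e^{\lambda t}$ for all $t\ge0$.
   Context: An operator $S\in\mathcal L(H)$ is bounded from below if there is $c>0$ with $\|Sh\|\ge c\|h\|$ for all $h\in H$. $T\in\mathcal L(H)$ is similar to a contraction if $\|RTR^{-1}\|\le1$ for some invertible $R\in\mathcal L(H)$. *)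

theory Defs
  imports "HOL-Analysis.Analysis"
begin

text \<open>A complex Hilbert space is modelled as a real Hilbert space (real inner product
space, complete) together with a complex structure J (multiplication by i), which is an
isometry with J o J = -id. Bounded complex-linear operators are the bounded real-linear
operators commuting with J.\<close>

definition complex_structure :: "('a::real_normed_vector \<Rightarrow>\<^sub>L 'a) \<Rightarrow> bool" where
  "complex_structure J \<longleftrightarrow> J o\<^sub>L J = - id_blinfun \<and> (\<forall>x. norm (J x) = norm x)"

definition complex_linear_op :: "('a::real_normed_vector \<Rightarrow>\<^sub>L 'a) \<Rightarrow> ('a \<Rightarrow>\<^sub>L 'a) \<Rightarrow> bool" where
  "complex_linear_op J A \<longleftrightarrow> A o\<^sub>L J = J o\<^sub>L A"

text \<open>C0-semigroup (values for t < 0 are irrelevant).\<close>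
definition C0_semigroup :: "(real \<Rightarrow> ('a::real_normed_vector \<Rightarrow>\<^sub>L 'a)) \<Rightarrow> bool" where
  "C0_semigroup T \<longleftrightarrow> T 0 = id_blinfun
     \<and> (\<forall>s t. 0 \<le> s \<longrightarrow> 0 \<le> t \<longrightarrow> T (s + t) = T s o\<^sub>L T t)
     \<and> (\<forall>x. ((\<lambda>t. blinfun_apply (T t) x) \<longlongrightarrow> x) (at_right 0))"

definition bounded_below :: "('a::real_normed_vector \<Rightarrow>\<^sub>L 'a) \<Rightarrow> bool" where
  "bounded_below S \<longleftrightarrow> (\<exists>c>0. \<forall>h. c * norm h \<le> norm (S h))"

definition invertible_pair :: "('a::real_normed_vector \<Rightarrow>\<^sub>L 'a) \<Rightarrow> ('a \<Rightarrow>\<^sub>L 'a) \<Rightarrow> ('a \<Rightarrow>\<^sub>L 'a) \<Rightarrow> bool" where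
  "invertible_pair J R R' \<longleftrightarrow> complex_linear_op J R \<and> R o\<^sub>L R' = id_blinfun \<and> R' o\<^sub>L R = id_blinfun"

definition similar_to_contraction :: "('a::real_normed_vector \<Rightarrow>\<^sub>L 'a) \<Rightarrow> ('a \<Rightarrow>\<^sub>L 'a) \<Rightarrow> bool" where
  "similar_to_contraction J A \<longleftrightarrow> (\<exists>R R'. invertible_pair J R R' \<and> norm (R o\<^sub>L A o\<^sub>L R') \<le> 1)"

definition similar_to_contraction_semigroup :: "('a::real_normed_vector \<Rightarrow>\<^sub>L 'a) \<Rightarrow> (real \<Rightarrow> ('a \<Rightarrow>\<^sub>L 'a)) \<Rightarrow> bool" where
  "similar_to_contraction_semigroup J T \<longleftrightarrow>
     (\<exists>R R'. invertible_pair J R R' \<and> (\<forall>t\<ge>0. norm (R o\<^sub>L T t o\<^sub>L R') \<le> 1))"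

definition similar_to_quasi_contraction_semigroup :: "('a::real_normed_vector \<Rightarrow>\<^sub>L 'a) \<Rightarrow> (real \<Rightarrow> ('a \<Rightarrow>\<^sub>L 'a)) \<Rightarrow> bool" where
  "similar_to_quasi_contraction_semigroup J T \<longleftrightarrow>
     (\<exists>R R' (lam::real). invertible_pair J R R' \<and> (\<forall>t\<ge>0. norm (R o\<^sub>L T t o\<^sub>L R') \<le> exp (lam * t)))"

end

(*
  Part (i). Suppose S T(tau) S' is a contraction, where S' is the inverse of S. Then
    q(h, k) = integral over [0, tau] of <S T(t) h, S T(t) k> dt
  is an inner product equivalent to the given one: it is bounded because a C0-semigroup is
  locally bounded (Banach-Steinhaus), and coercive because T(t') bounded below makes the T(t),
  0 <= t <= tau, uniformly bounded below. Replacing h by T(s) h translates the window of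
  integration to [s, tau + s], and its part beyond tau is the image of its part in [0, s]
  under the contraction S T(tau) S'; so q(T(s) h, T(s) h) <= q(h, h) for s in [0, tau], and
  then for all s >= 0 by the semigroup law. Finally q(h, h) = norm (R h)^2, where R is the
  square root of the Gram operator of q, computed as a binomial series; R is complex linear
  because q is invariant under J, and R T(t) R^-1 is a contraction for every t.

  Part (ii). Rescaling T(t) by exp (- w t) makes T(1) a contraction, and part (i) applies.
*)

theory Submission
  imports Defs "HOL-Computational_Algebra.Formal_Power_Series"
begin

section \<open>Series of bounded operators\<close>

lemma blinfun_compose_assoc: "(A o\<^sub>L B) o\<^sub>L C = A o\<^sub>L (B o\<^sub>L C)"
  by (rule blinfun_eqI) simp

lemma blinfun_compose_id [simp]:
  "id_blinfun o\<^sub>L A = A"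
  "A o\<^sub>L id_blinfun = A"
  by (auto intro: blinfun_eqI)

lemmas blinfun_compose_scaleR =
  bounded_bilinear.scaleR_left[OF bounded_bilinear_blinfun_compose]
  bounded_bilinear.scaleR_right[OF bounded_bilinear_blinfun_compose]

text \<open>The library proves \<open>summable_norm_cancel\<close> and the completeness of \<open>'a \<Rightarrow>\<^sub>L 'b\<close> only for
  the class \<open>banach\<close>, which a type of sort \<open>{real_inner, complete_space}\<close> is not known to
  belong to.\<close>

lemma summable_norm_cancel_complete:
  fixes f :: "nat \<Rightarrow> 'a::{real_normed_vector,complete_space}"
  assumes summable: "summable (\<lambda>n. norm (f n))"
  shows "summable f"
proof (rule summable_bounded_partials)
  let ?tail = "\<lambda>a. (\<Sum>n. norm (f n)) - (\<Sum>n<Suc a. norm (f n))"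
  show "?tail \<longlonglongrightarrow> 0"
  proof -
    have "?tail \<longlonglongrightarrow> (\<Sum>n. norm (f n)) - (\<Sum>n. norm (f n))"
      by (intro tendsto_diff tendsto_const LIMSEQ_Suc summable_LIMSEQ summable)
    then show ?thesis by (simp only: diff_self)
  qed
  show "\<forall>\<^sub>F x0 in sequentially. \<forall>a\<ge>x0. \<forall>b>a. norm (sum f {a<..b}) \<le> ?tail a"
  proof (intro always_eventually allI impI)
    fix a b :: nat assume "a < b"
    have "norm (sum f {a<..b}) \<le> (\<Sum>n\<in>{a<..b}. norm (f n))"
      by (rule norm_sum)
    also have "\<dots> = (\<Sum>n<Suc b. norm (f n)) - (\<Sum>n<Suc a. norm (f n))"
    proof -
      have "{..<Suc b} = {..<Suc a} \<union> {a<..b}"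
        using \<open>a < b\<close> by auto
      then show ?thesis
        unfolding \<open>{..<Suc b} = _\<close> by (subst sum.union_disjoint) auto
    qed
    also have "(\<Sum>n<Suc b. norm (f n)) \<le> (\<Sum>n. norm (f n))"
      using summable by (intro sum_le_suminf) auto
    finally show "norm (sum f {a<..b}) \<le> ?tail a" by simp
  qed
qed

lemma norm_suminf_le_of_summable:
  fixes f :: "nat \<Rightarrow> 'a::real_normed_vector"
  assumes "summable f" and "summable g" and "\<And>n. norm (f n) \<le> g n"
  shows "norm (suminf f) \<le> suminf g"
  using assms
  by (intro LIMSEQ_le[OF tendsto_norm[OF summable_LIMSEQ] summable_LIMSEQ])
    (auto intro!: order_trans[OF norm_sum] sum_mono)

lemma blinfun_summable_norm_cancel:
  fixes f :: "nat \<Rightarrow> 'a::real_normed_vector \<Rightarrow>\<^sub>L 'b::{real_normed_vector,complete_space}"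
  assumes summable: "summable (\<lambda>n. norm (f n))"
  shows "summable f"
proof -
  have tail_summable: "summable (\<lambda>n. norm (f (n + k)))" for k
    using summable by (rule summable_ignore_initial_segment)
  have apply_summable: "summable (\<lambda>n. f n x)" for x
  proof (rule summable_norm_cancel_complete)
    show "summable (\<lambda>n. norm (f n x))"
      using summable_mult2[OF summable, of "norm x"]
      by (rule summable_comparison_test[rotated]) (simp add: norm_blinfun)
  qed
  have norm_tail_apply: "norm (\<Sum>n. f (n + k) x) \<le> (\<Sum>n. norm (f (n + k))) * norm x" for x k
  proof -
    have "norm (\<Sum>n. f (n + k) x) \<le> (\<Sum>n. norm (f (n + k)) * norm x)"
      using summable_ignore_initial_segment[OF apply_summable[of x], of k]
        summable_mult2[OF tail_summable[of k], of "norm x"]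
      by (rule norm_suminf_le_of_summable) (simp add: norm_blinfun)
    then show ?thesis
      by (simp add: suminf_mult2[OF tail_summable])
  qed
  define v where "v x = (\<Sum>n. f n x)" for x
  have "bounded_linear v"
  proof
    show "v (x + y) = v x + v y" for x y
      using apply_summable by (simp add: v_def blinfun.add_right suminf_add)
    show "v (r *\<^sub>R x) = r *\<^sub>R v x" for r x
      using apply_summable by (simp add: v_def blinfun.scaleR_right suminf_scaleR_right)
    show "\<exists>K. \<forall>x. norm (v x) \<le> norm x * K"
      using norm_tail_apply[where k=0]
      by (intro exI[of _ "\<Sum>n. norm (f n)"]) (simp add: v_def mult.commute)
  qed
  have "f sums Blinfun v"
    unfolding sums_def
  proof (rule LIM_zero_cancel, rule Lim_null_comparison)
    show "\<forall>\<^sub>F N in sequentially. norm ((\<Sum>n<N. f n) - Blinfun v) \<le> (\<Sum>n. norm (f (n + N)))"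
    proof (intro always_eventually allI norm_blinfun_bound)
      fix N x
      have "((\<Sum>n<N. f n) - Blinfun v) x = - (\<Sum>n. f (n + N) x)"
        using suminf_minus_initial_segment[OF apply_summable[of x], of N]
        by (simp add: bounded_linear_Blinfun_apply[OF \<open>bounded_linear v\<close>] v_def
            blinfun.sum_left blinfun.diff_left)
      then show "norm (((\<Sum>n<N. f n) - Blinfun v) x) \<le> (\<Sum>n. norm (f (n + N))) * norm x"
        using norm_tail_apply by simp
    qed (use tail_summable in \<open>auto intro: suminf_nonneg\<close>)
    have "(\<lambda>N. (\<Sum>n. norm (f n)) - (\<Sum>n<N. norm (f n))) \<longlonglongrightarrow> (\<Sum>n. norm (f n)) - (\<Sum>n. norm (f n))"
      by (intro tendsto_diff tendsto_const summable_LIMSEQ summable)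
    then show "(\<lambda>N. \<Sum>n. norm (f (n + N))) \<longlonglongrightarrow> 0"
      by (simp add: suminf_minus_initial_segment[OF summable])
  qed
  then show ?thesis
    by (rule sums_summable)
qed

lemma Cauchy_product_defect_tendsto_0:
  fixes a b :: "nat \<Rightarrow> real"
  assumes a: "summable (\<lambda>k. \<bar>a k\<bar>)" and b: "summable (\<lambda>k. \<bar>b k\<bar>)"
  shows "(\<lambda>n. (\<Sum>i<n. a i) * (\<Sum>j<n. b j) - (\<Sum>k<n. \<Sum>i\<le>k. a i * b (k - i))) \<longlonglongrightarrow> 0"
proof -
  have "summable a" "summable b"
    using a b by (simp_all add: summable_norm_cancel)
  then have "(\<lambda>n. (\<Sum>i<n. a i) * (\<Sum>j<n. b j)) \<longlonglongrightarrow> (\<Sum>k. a k) * (\<Sum>k. b k)"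
    by (intro tendsto_mult summable_LIMSEQ)
  moreover have "(\<lambda>n. \<Sum>k<n. \<Sum>i\<le>k. a i * b (k - i)) \<longlonglongrightarrow> (\<Sum>k. a k) * (\<Sum>k. b k)"
    using Series.Cauchy_product_sums[of a b] a b by (simp add: sums_def)
  ultimately show ?thesis
    using tendsto_diff by fastforce
qed

text \<open>Mertens' theorem for a bounded bilinear product: the partial sums of the Cauchy product
  sum over a triangle, the products of partial sums over the enclosing square, and the difference
  is dominated by the same defect for the absolute values.\<close>

lemma (in bounded_bilinear) Cauchy_product_sums:
  assumes a: "summable (\<lambda>k. norm (a k))" and b: "summable (\<lambda>k. norm (b k))"
    and "a sums A" and "b sums B"
  shows "(\<lambda>k. \<Sum>i\<le>k. prod (a i) (b (k - i))) sums prod A B"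
proof -
  obtain K where K: "\<And>x y. norm (prod x y) \<le> norm x * norm y * K"
    using bounded by blast
  let ?square = "\<lambda>n::nat. {..<n} \<times> {..<n}" and ?triangle = "\<lambda>n. {(i, j). i + j < n}"
  have triangle_square: "?triangle n \<subseteq> ?square n" for n
    by auto
  define D where "D n = (\<Sum>(i, j)\<in>?square n - ?triangle n. norm (a i) * norm (b j))" for n
  have "D = (\<lambda>n. (\<Sum>i<n. norm (a i)) * (\<Sum>j<n. norm (b j))
      - (\<Sum>k<n. \<Sum>i\<le>k. norm (a i) * norm (b (k - i))))"
    by (rule ext) (simp add: D_def sum_diff[OF _ triangle_square] sum_product sum.cartesian_product
        sum.triangle_reindex)
  then have "D \<longlonglongrightarrow> 0"
    using Cauchy_product_defect_tendsto_0[of "\<lambda>k. norm (a k)" "\<lambda>k. norm (b k)"] a b by simp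
  have bound: "norm (prod (\<Sum>i<n. a i) (\<Sum>j<n. b j) - (\<Sum>k<n. \<Sum>i\<le>k. prod (a i) (b (k - i))))
      \<le> K * D n" for n
  proof -
    have "prod (\<Sum>i<n. a i) (\<Sum>j<n. b j) - (\<Sum>k<n. \<Sum>i\<le>k. prod (a i) (b (k - i)))
        = (\<Sum>i<n. \<Sum>j<n. prod (a i) (b j)) - (\<Sum>(i, j)\<in>?triangle n. prod (a i) (b j))"
      unfolding sum_left by (simp add: sum_right sum.triangle_reindex)
    also have "\<dots> = (\<Sum>(i, j)\<in>?square n - ?triangle n. prod (a i) (b j))"
      by (simp add: sum_diff[OF _ triangle_square] sum.cartesian_product)
    also have "norm \<dots> \<le> (\<Sum>(i, j)\<in>?square n - ?triangle n. norm (a i) * norm (b j) * K)"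
      by (rule order_trans[OF norm_sum sum_mono]) (auto simp: K)
    also have "\<dots> = K * D n"
      by (simp add: D_def sum_distrib_left case_prod_unfold mult.commute)
    finally show ?thesis .
  qed
  have "(\<lambda>n. prod (\<Sum>i<n. a i) (\<Sum>j<n. b j) - (\<Sum>k<n. \<Sum>i\<le>k. prod (a i) (b (k - i)))) \<longlonglongrightarrow> 0"
    by (rule Lim_null_comparison[where g="\<lambda>n. K * D n"])
      (use bound \<open>D \<longlonglongrightarrow> 0\<close> in \<open>auto intro: always_eventually tendsto_mult_right_zero\<close>)
  moreover have "(\<lambda>n. prod (\<Sum>i<n. a i) (\<Sum>j<n. b j)) \<longlonglongrightarrow> prod A B"
    using assms(3,4) unfolding sums_def by (rule tendsto)
  ultimately show ?thesis
    unfolding sums_def by (rule Lim_transform2[rotated])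
qed

primrec blinfun_pow :: "('a::real_normed_vector \<Rightarrow>\<^sub>L 'a) \<Rightarrow> nat \<Rightarrow> 'a \<Rightarrow>\<^sub>L 'a" where
  "blinfun_pow K 0 = id_blinfun"
| "blinfun_pow K (Suc n) = K o\<^sub>L blinfun_pow K n"

lemma blinfun_pow_add: "blinfun_pow K (m + n) = blinfun_pow K m o\<^sub>L blinfun_pow K n"
  by (induction m) (simp_all add: blinfun_compose_assoc)

lemma norm_blinfun_pow_le: "norm (blinfun_pow K n) \<le> norm K ^ n"
proof (induction n)
  case (Suc n)
  have "norm (blinfun_pow K (Suc n)) \<le> norm K * norm (blinfun_pow K n)"
    by (simp add: norm_blinfun_compose)
  also have "\<dots> \<le> norm K * norm K ^ n"
    using Suc.IH by (simp add: mult_left_mono)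
  finally show ?case by simp
qed (simp add: norm_blinfun_id_le)

lemma blinfun_pow_commute:
  assumes "J o\<^sub>L K = K o\<^sub>L J"
  shows "J o\<^sub>L blinfun_pow K n = blinfun_pow K n o\<^sub>L J"
proof (induction n)
  case (Suc n)
  have "J o\<^sub>L (K o\<^sub>L blinfun_pow K n) = K o\<^sub>L (J o\<^sub>L blinfun_pow K n)"
    using assms by (simp flip: blinfun_compose_assoc)
  then show ?case
    using Suc.IH by (simp add: blinfun_compose_assoc)
qed simp

definition selfadjoint :: "('a::real_inner \<Rightarrow>\<^sub>L 'a) \<Rightarrow> bool" where
  "selfadjoint K \<longleftrightarrow> (\<forall>x y. K x \<bullet> y = x \<bullet> K y)"

lemma selfadjoint_blinfun_pow:
  assumes "selfadjoint K"
  shows "selfadjoint (blinfun_pow K n)"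
  unfolding selfadjoint_def
proof (induction n)
  case (Suc n)
  have "K (blinfun_pow K n y) = blinfun_pow K n (K y)" for y
    using blinfun_pow_commute[of K K n] by (metis blinfun_apply_blinfun_compose)
  then show ?case
    using Suc.IH assms by (simp add: selfadjoint_def)
qed simp

lemma abs_gbinomial_le_1:
  fixes a :: real
  assumes "-1 \<le> a" and "a \<le> 1"
  shows "\<bar>a gchoose n\<bar> \<le> 1"
proof (induction n)
  case (Suc n)
  have "real (Suc n) * (a gchoose Suc n) = (a - real n) * (a gchoose n)"
    using gbinomial_mult_1[of a n] by (simp add: algebra_simps)
  then have "real (Suc n) * \<bar>a gchoose Suc n\<bar> = \<bar>a - real n\<bar> * \<bar>a gchoose n\<bar>"
    by (metis abs_mult abs_of_nat)
  also have "\<dots> \<le> real (Suc n) * 1"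
    using Suc.IH assms by (intro mult_mono) auto
  finally show ?case by simp
qed simp

text \<open>\<open>blinfun_binomial_series a K\<close> is \<open>(id - K) powr a\<close>, expanded as a binomial series.\<close>

definition blinfun_binomial_series :: "real \<Rightarrow> ('a::real_normed_vector \<Rightarrow>\<^sub>L 'a) \<Rightarrow> 'a \<Rightarrow>\<^sub>L 'a" where
  "blinfun_binomial_series a K = (\<Sum>n. ((- 1) ^ n * (a gchoose n)) *\<^sub>R blinfun_pow K n)"

lemma summable_norm_binomial_series:
  fixes K :: "'a::real_normed_vector \<Rightarrow>\<^sub>L 'a"
  assumes "norm K < 1" and "\<bar>a\<bar> \<le> 1"
  shows "summable (\<lambda>n. norm (((- 1) ^ n * (a gchoose n)) *\<^sub>R blinfun_pow K n))"
proof (rule summable_comparison_test)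
  show "summable (\<lambda>n. norm K ^ n)"
    using assms(1) by (simp add: summable_geometric)
  have "\<bar>a gchoose n\<bar> * norm (blinfun_pow K n) \<le> 1 * norm K ^ n" for n
    using abs_gbinomial_le_1[of a n] assms(2) norm_blinfun_pow_le[of K n]
    by (intro mult_mono) auto
  then show "\<exists>N. \<forall>n\<ge>N. norm (norm (((- 1) ^ n * (a gchoose n)) *\<^sub>R blinfun_pow K n)) \<le> norm K ^ n"
    by (simp add: abs_mult)
qed

lemma blinfun_binomial_series_sums:
  fixes K :: "'a::{real_normed_vector,complete_space} \<Rightarrow>\<^sub>L 'a"
  assumes "norm K < 1" and "\<bar>a\<bar> \<le> 1"
  shows "(\<lambda>n. ((- 1) ^ n * (a gchoose n)) *\<^sub>R blinfun_pow K n) sums blinfun_binomial_series a K"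
  unfolding blinfun_binomial_series_def
  by (intro summable_sums blinfun_summable_norm_cancel summable_norm_binomial_series assms)

lemma binomial_coefficient_convolution:
  fixes a b :: real
  shows "(\<Sum>i\<le>k. ((- 1) ^ i * (a gchoose i)) * ((- 1) ^ (k - i) * (b gchoose (k - i))))
    = (- 1) ^ k * ((a + b) gchoose k)"
proof -
  have "(\<Sum>i\<le>k. ((- 1) ^ i * (a gchoose i)) * ((- 1) ^ (k - i) * (b gchoose (k - i))))
      = (\<Sum>i\<le>k. (- 1) ^ k * ((a gchoose i) * (b gchoose (k - i))))"
  proof (intro sum.cong refl)
    fix i assume "i \<in> {..k}"
    then have "(- 1 :: real) ^ i * (- 1) ^ (k - i) = (- 1) ^ k"
      by (simp add: power_add[symmetric])
    then show "((- 1) ^ i * (a gchoose i)) * ((- 1) ^ (k - i) * (b gchoose (k - i)))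
        = (- 1) ^ k * ((a gchoose i) * (b gchoose (k - i)))"
      by (metis mult.assoc mult.left_commute)
  qed
  also have "\<dots> = (- 1) ^ k * (\<Sum>i=0..k. (a gchoose i) * (b gchoose (k - i)))"
    by (simp add: sum_distrib_left atLeast0AtMost)
  finally show ?thesis
    by (simp add: gbinomial_Vandermonde)
qed

lemma blinfun_binomial_series_add:
  fixes K :: "'a::{real_normed_vector,complete_space} \<Rightarrow>\<^sub>L 'a"
  assumes "norm K < 1" and "\<bar>a\<bar> \<le> 1" and "\<bar>b\<bar> \<le> 1"
  shows "blinfun_binomial_series a K o\<^sub>L blinfun_binomial_series b K
    = blinfun_binomial_series (a + b) K"
proof -
  interpret compose: bounded_bilinear "(o\<^sub>L) :: ('a \<Rightarrow>\<^sub>L 'a) \<Rightarrow> _"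
    by (rule bounded_bilinear_blinfun_compose)
  let ?c = "\<lambda>a n. (- 1) ^ n * (a gchoose n)"
  have "(\<lambda>k. \<Sum>i\<le>k. (?c a i *\<^sub>R blinfun_pow K i) o\<^sub>L (?c b (k - i) *\<^sub>R blinfun_pow K (k - i)))
      sums (blinfun_binomial_series a K o\<^sub>L blinfun_binomial_series b K)"
    using assms
    by (intro compose.Cauchy_product_sums summable_norm_binomial_series
        blinfun_binomial_series_sums)
  moreover have "(\<Sum>i\<le>k. (?c a i *\<^sub>R blinfun_pow K i) o\<^sub>L (?c b (k - i) *\<^sub>R blinfun_pow K (k - i)))
      = ?c (a + b) k *\<^sub>R blinfun_pow K k" for k
  proof -
    have "(\<Sum>i\<le>k. (?c a i *\<^sub>R blinfun_pow K i) o\<^sub>L (?c b (k - i) *\<^sub>R blinfun_pow K (k - i)))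
        = (\<Sum>i\<le>k. (?c a i * ?c b (k - i)) *\<^sub>R blinfun_pow K k)"
      by (intro sum.cong refl)
        (simp add: compose.scaleR_left compose.scaleR_right blinfun_pow_add[symmetric])
    then show ?thesis
      by (simp add: scaleR_sum_left[symmetric] binomial_coefficient_convolution)
  qed
  ultimately show ?thesis
    unfolding blinfun_binomial_series_def by (simp add: sums_iff)
qed

lemma blinfun_binomial_series_0: "blinfun_binomial_series 0 K = id_blinfun"
  unfolding blinfun_binomial_series_def
  by (subst suminf_finite[of "{0}"]) (auto simp: gbinomial_0_left)

lemma blinfun_binomial_series_1: "blinfun_binomial_series 1 K = id_blinfun - K"
proof -
  have "(1::real) gchoose n = 0" if "n \<notin> {0, 1}" for n
    using that binomial_gbinomial[of 1 n] by (simp add: binomial_eq_0)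
  then show ?thesis
    unfolding blinfun_binomial_series_def
    by (subst suminf_finite[of "{0, 1}"]) (auto intro: blinfun_eqI)
qed

lemma selfadjoint_sums:
  fixes X :: "nat \<Rightarrow> 'a::real_inner \<Rightarrow>\<^sub>L 'a"
  assumes sums: "X sums L" and "\<And>n. selfadjoint (X n)"
  shows "selfadjoint L"
  unfolding selfadjoint_def
proof (intro allI)
  fix x y
  have "(\<lambda>n. X n x \<bullet> y) sums (L x \<bullet> y)"
    by (intro bounded_linear.sums[OF bounded_linear_inner_left]
        bounded_linear.sums[OF blinfun.bounded_linear_left] sums)
  moreover have "(\<lambda>n. x \<bullet> X n y) sums (x \<bullet> L y)"
    by (intro bounded_linear.sums[OF bounded_linear_inner_right]
        bounded_linear.sums[OF blinfun.bounded_linear_left] sums)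
  ultimately show "L x \<bullet> y = x \<bullet> L y"
    using assms(2) sums_unique2 by (simp add: selfadjoint_def)
qed

lemma blinfun_compose_commute_sums:
  assumes sums: "X sums L" and "\<And>n. J o\<^sub>L X n = X n o\<^sub>L J"
  shows "J o\<^sub>L L = L o\<^sub>L J"
proof -
  have "(\<lambda>n. J o\<^sub>L X n) sums (J o\<^sub>L L)"
    by (rule bounded_linear.sums[OF
          bounded_bilinear.bounded_linear_right[OF bounded_bilinear_blinfun_compose] sums])
  moreover have "(\<lambda>n. X n o\<^sub>L J) sums (L o\<^sub>L J)"
    by (rule bounded_linear.sums[OF
          bounded_bilinear.bounded_linear_left[OF bounded_bilinear_blinfun_compose] sums])
  ultimately show ?thesis
    using assms(2) sums_unique2 by simp
qed

lemma selfadjoint_sqrt_id_minus: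
  fixes K :: "'a::{real_inner,complete_space} \<Rightarrow>\<^sub>L 'a"
  assumes "selfadjoint K" and "norm K < 1"
  obtains R R' where "R o\<^sub>L R = id_blinfun - K"
    and "R o\<^sub>L R' = id_blinfun" and "R' o\<^sub>L R = id_blinfun"
    and "selfadjoint R" and "\<And>J. J o\<^sub>L K = K o\<^sub>L J \<Longrightarrow> J o\<^sub>L R = R o\<^sub>L J"
proof
  let ?R = "blinfun_binomial_series (1/2) K" and ?R' = "blinfun_binomial_series (-1/2) K"
  show "?R o\<^sub>L ?R = id_blinfun - K"
    using blinfun_binomial_series_add[OF \<open>norm K < 1\<close>, of "1/2" "1/2"]
    by (simp add: blinfun_binomial_series_1)
  show "?R o\<^sub>L ?R' = id_blinfun" "?R' o\<^sub>L ?R = id_blinfun"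
    using blinfun_binomial_series_add[OF \<open>norm K < 1\<close>, of "1/2" "-1/2"]
      blinfun_binomial_series_add[OF \<open>norm K < 1\<close>, of "-1/2" "1/2"]
    by (simp_all add: blinfun_binomial_series_0)
  have sums: "(\<lambda>n. ((- 1) ^ n * ((1/2) gchoose n)) *\<^sub>R blinfun_pow K n) sums ?R"
    using \<open>norm K < 1\<close> by (rule blinfun_binomial_series_sums) simp
  show "selfadjoint ?R"
    using selfadjoint_blinfun_pow[OF \<open>selfadjoint K\<close>]
    by (intro selfadjoint_sums[OF sums]) (simp add: selfadjoint_def blinfun.scaleR_left)
  show "J o\<^sub>L ?R = ?R o\<^sub>L J" if "J o\<^sub>L K = K o\<^sub>L J" for J
    using blinfun_pow_commute[OF that]
    by (intro blinfun_compose_commute_sums[OF sums]) (simp add: blinfun_compose_scaleR)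
qed

section \<open>Hilbert space operators\<close>

lemma nonneg_quadratic_discriminant:
  fixes A B C :: real
  assumes "0 \<le> C" and nonneg: "\<And>s. 0 \<le> A + 2 * s * B + s\<^sup>2 * C"
  shows "B\<^sup>2 \<le> A * C"
proof (cases "C = 0")
  case True
  have "B = 0"
  proof (rule ccontr)
    assume "B \<noteq> 0"
    have "0 \<le> A + 2 * (- (\<bar>A\<bar> + 1) / (2 * B)) * B + (- (\<bar>A\<bar> + 1) / (2 * B))\<^sup>2 * C"
      by (rule nonneg)
    also have "\<dots> = A - \<bar>A\<bar> - 1"
      using True \<open>B \<noteq> 0\<close> by (simp add: field_simps)
    finally show False by linarith
  qed
  with True show ?thesis by simp
next
  case False
  with \<open>0 \<le> C\<close> have "C > 0" by simp
  have "0 \<le> A + 2 * (- B / C) * B + (- B / C)\<^sup>2 * C"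
    by (rule nonneg)
  also have "\<dots> = A - B\<^sup>2 / C"
    using \<open>C > 0\<close> by (simp add: field_simps power2_eq_square)
  finally show ?thesis
    using \<open>C > 0\<close> by (simp add: field_simps)
qed

lemma selfadjoint_nonneg_Cauchy_Schwarz:
  fixes K :: "'a::real_inner \<Rightarrow>\<^sub>L 'a"
  assumes "selfadjoint K" and nonneg: "\<And>x. 0 \<le> K x \<bullet> x"
  shows "(K x \<bullet> y)\<^sup>2 \<le> (K x \<bullet> x) * (K y \<bullet> y)"
proof (rule nonneg_quadratic_discriminant)
  fix s
  have "K y \<bullet> x = K x \<bullet> y"
    using assms(1) by (simp add: selfadjoint_def inner_commute)
  then have "K (x + s *\<^sub>R y) \<bullet> (x + s *\<^sub>R y) = K x \<bullet> x + 2 * s * (K x \<bullet> y) + s\<^sup>2 * (K y \<bullet> y)"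
    by (simp add: blinfun.add_right blinfun.scaleR_right power2_eq_square algebra_simps)
  then show "0 \<le> K x \<bullet> x + 2 * s * (K x \<bullet> y) + s\<^sup>2 * (K y \<bullet> y)"
    using nonneg by metis
qed (rule nonneg)

lemma norm_selfadjoint_nonneg_le:
  fixes K :: "'a::real_inner \<Rightarrow>\<^sub>L 'a"
  assumes "selfadjoint K" and nonneg: "\<And>x. 0 \<le> K x \<bullet> x"
    and upper: "\<And>x. K x \<bullet> x \<le> a * (x \<bullet> x)" and "0 \<le> a"
  shows "norm K \<le> a"
proof (rule norm_blinfun_bound[OF \<open>0 \<le> a\<close>])
  fix x
  have "(norm (K x))\<^sup>2 * (norm (K x))\<^sup>2 = (K x \<bullet> K x)\<^sup>2"
    by (simp add: dot_square_norm power2_eq_square)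
  also have "\<dots> \<le> (K x \<bullet> x) * (K (K x) \<bullet> K x)"
    using assms(1) nonneg by (rule selfadjoint_nonneg_Cauchy_Schwarz)
  also have "\<dots> \<le> (a * (x \<bullet> x)) * (a * (K x \<bullet> K x))"
    using upper nonneg \<open>0 \<le> a\<close> by (intro mult_mono) auto
  also have "\<dots> = (a * norm x)\<^sup>2 * (norm (K x))\<^sup>2"
    by (simp add: dot_square_norm power2_eq_square)
  finally have le: "(norm (K x))\<^sup>2 * (norm (K x))\<^sup>2 \<le> (a * norm x)\<^sup>2 * (norm (K x))\<^sup>2" .
  show "norm (K x) \<le> a * norm x"
  proof (cases "K x = 0")
    case False
    then have "(norm (K x))\<^sup>2 \<le> (a * norm x)\<^sup>2"
      using mult_right_le_imp_le[OF le] by simp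
    then show ?thesis
      using \<open>0 \<le> a\<close> by (simp add: power2_le_iff_abs_le)
  qed (use \<open>0 \<le> a\<close> in simp)
qed

lemma quadratic_functional_minimizing_Cauchy:
  fixes f :: "'a::real_inner \<Rightarrow> real" and x :: "nat \<Rightarrow> 'a"
  assumes "linear f" and lower: "\<And>y. m \<le> y \<bullet> y - 2 * f y"
    and minimizing: "\<And>n. x n \<bullet> x n - 2 * f (x n) \<le> m + 1 / (real n + 1)"
  shows "Cauchy x"
proof (rule metric_CauchyI)
  interpret f: linear f by fact
  have parallelogram: "(dist u v)\<^sup>2 = 2 * (u \<bullet> u - 2 * f u) + 2 * (v \<bullet> v - 2 * f v)
      - 4 * ((1/2) *\<^sub>R (u + v) \<bullet> (1/2) *\<^sub>R (u + v) - 2 * f ((1/2) *\<^sub>R (u + v)))" for u v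
    by (simp add: dist_norm power2_norm_eq_inner f.add f.scale inner_simps algebra_simps)
  have dist_bound: "(dist (x n) (x k))\<^sup>2 \<le> 2 / (real n + 1) + 2 / (real k + 1)" for n k
    using minimizing[of n] minimizing[of k] lower[of "(1/2) *\<^sub>R (x n + x k)"]
    unfolding parallelogram by simp
  fix e :: real assume "e > 0"
  obtain N :: nat where "4 / e\<^sup>2 < real N"
    using reals_Archimedean2 by blast
  then have "4 / e\<^sup>2 < real N + 1"
    by linarith
  then have N: "4 / (real N + 1) < e\<^sup>2"
    using \<open>e > 0\<close> by (simp add: field_simps)
  have "dist (x a) (x b) < e" if "N \<le> a" "N \<le> b" for a b
  proof -
    have "2 / (real a + 1) \<le> 2 / (real N + 1)" "2 / (real b + 1) \<le> 2 / (real N + 1)"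
      using that by (auto intro!: divide_left_mono)
    with dist_bound[of a b] N have "(dist (x a) (x b))\<^sup>2 < e\<^sup>2"
      by linarith
    then show ?thesis
      using \<open>e > 0\<close> by (simp add: power_less_imp_less_base)
  qed
  then show "\<exists>N. \<forall>a\<ge>N. \<forall>b\<ge>N. dist (x a) (x b) < e"
    by blast
qed

lemma quadratic_functional_has_minimizer:
  fixes f :: "'a::{real_inner,complete_space} \<Rightarrow> real"
  assumes "bounded_linear f"
  obtains y where "\<And>x. y \<bullet> y - 2 * f y \<le> x \<bullet> x - 2 * f x"
proof -
  interpret f: bounded_linear f by fact
  define \<Phi> where "\<Phi> x = x \<bullet> x - 2 * f x" for x
  obtain B where B: "\<And>x. norm (f x) \<le> norm x * B"
    using f.bounded by blast
  have "- B\<^sup>2 \<le> \<Phi> x" for x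
  proof -
    have "- B\<^sup>2 \<le> (norm x)\<^sup>2 - 2 * (norm x * B)"
      using sum_power2_ge_zero[of "norm x - B" 0] by (simp add: power2_eq_square algebra_simps)
    also have "\<dots> \<le> \<Phi> x"
      using B[of x] by (simp add: \<Phi>_def dot_square_norm)
    finally show ?thesis .
  qed
  then have bdd: "bdd_below (range \<Phi>)"
    by (intro bdd_belowI[of _ "- B\<^sup>2"]) auto
  define m where "m = Inf (range \<Phi>)"
  have m_le: "m \<le> \<Phi> x" for x
    unfolding m_def using bdd by (simp add: cInf_lower)
  have "\<exists>x. \<Phi> x < m + 1 / (real n + 1)" for n
    using cInf_lessD[of "range \<Phi>" "m + 1 / (real n + 1)"] by (auto simp: m_def)
  then obtain x where x: "\<And>n. \<Phi> (x n) < m + 1 / (real n + 1)"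
    by metis
  have "Cauchy x"
    using x m_le unfolding \<Phi>_def
    by (intro quadratic_functional_minimizing_Cauchy[OF f.linear]) (auto intro: less_imp_le)
  then obtain y where "x \<longlonglongrightarrow> y"
    using Cauchy_convergent_iff convergent_def by blast
  then have "(\<lambda>n. \<Phi> (x n)) \<longlonglongrightarrow> \<Phi> y"
    unfolding \<Phi>_def by (intro tendsto_intros f.tendsto)
  moreover have "(\<lambda>n. m + 1 / (real n + 1)) \<longlonglongrightarrow> m"
    using tendsto_add[OF tendsto_const LIMSEQ_inverse_real_of_nat]
    by (simp add: inverse_eq_divide add.commute)
  ultimately have "\<Phi> y \<le> m"
    using x by (intro LIMSEQ_le) (auto intro: less_imp_le)
  then show ?thesis
    using m_le that unfolding \<Phi>_def by (meson order_trans)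
qed

lemma riesz_representation:
  fixes f :: "'a::{real_inner,complete_space} \<Rightarrow> real"
  assumes "bounded_linear f"
  obtains y where "\<And>x. f x = x \<bullet> y"
proof -
  interpret f: bounded_linear f by fact
  obtain y where min: "\<And>x. y \<bullet> y - 2 * f y \<le> x \<bullet> x - 2 * f x"
    using quadratic_functional_has_minimizer[OF assms] by blast
  have "f v = v \<bullet> y" for v
  proof -
    have "0 \<le> 0 + 2 * s * (y \<bullet> v - f v) + s\<^sup>2 * (v \<bullet> v)" for s
      using min[of "y + s *\<^sub>R v"]
      by (simp add: f.add f.scale inner_simps power2_eq_square algebra_simps inner_commute)
    then have "(y \<bullet> v - f v)\<^sup>2 \<le> 0 * (v \<bullet> v)"
      by (intro nonneg_quadratic_discriminant) auto
    then show ?thesis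
      by (simp add: inner_commute)
  qed
  then show ?thesis
    using that by blast
qed

lemma bounded_bilinear_form_representation:
  fixes q :: "'a::{real_inner,complete_space} \<Rightarrow> 'a \<Rightarrow> real"
  assumes "bounded_bilinear q"
  obtains G :: "'a \<Rightarrow>\<^sub>L 'a" where "\<And>h k. G h \<bullet> k = q h k"
proof -
  interpret q: bounded_bilinear q by fact
  have "\<exists>y. \<forall>k. q h k = k \<bullet> y" for h
    using riesz_representation[OF q.bounded_linear_right] by metis
  then obtain g where g: "\<And>h k. q h k = k \<bullet> g h"
    by metis
  have g_eqI: "u = v" if "\<And>k. k \<bullet> u = k \<bullet> v" for u v :: 'a
  proof -
    have "(u - v) \<bullet> (u - v) = 0"
      using that[of "u - v"] by (simp add: inner_diff_right)
    then show ?thesis by simp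
  qed
  obtain C where C: "\<And>a b. norm (q a b) \<le> norm a * norm b * C" and "C > 0"
    using q.pos_bounded by blast
  have "bounded_linear g"
  proof
    show "g (x + y) = g x + g y" for x y
      by (rule g_eqI) (simp add: g[symmetric] q.add_left inner_add_right)
    show "g (r *\<^sub>R x) = r *\<^sub>R g x" for r x
      by (rule g_eqI) (simp add: g[symmetric] q.scaleR_left inner_scaleR_right)
    have "norm (g h) \<le> norm h * C" for h
    proof -
      have "norm (g h) * norm (g h) = q h (g h)"
        by (simp add: g dot_square_norm power2_eq_square)
      also have "\<dots> \<le> (norm h * C) * norm (g h)"
        using C[of h "g h"] by (simp add: algebra_simps)
      finally show ?thesis
        using \<open>C > 0\<close> by (cases "g h = 0") (auto simp: mult_le_cancel_right)
    qed
    then show "\<exists>K. \<forall>x. norm (g x) \<le> norm x * K"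
      by blast
  qed
  show ?thesis
    by (rule that[of "Blinfun g"])
      (simp add: bounded_linear_Blinfun_apply[OF \<open>bounded_linear g\<close>] g inner_commute)
qed

lemma complex_structure_inner:
  assumes "complex_structure J"
  shows "J x \<bullet> J y = x \<bullet> (y::'a::real_inner)"
proof -
  have norm_J: "J z \<bullet> J z = z \<bullet> z" for z
    using assms by (simp add: complex_structure_def dot_square_norm)
  show ?thesis
    using norm_J[of "x + y"] norm_J[of x] norm_J[of y]
    by (simp add: blinfun.add_right inner_add_left inner_add_right inner_commute)
qed

lemma complex_structure_apply_apply:
  assumes "complex_structure J"
  shows "J (J x) = - x"
proof -
  have "(J o\<^sub>L J) x = (- id_blinfun) x"
    using assms by (simp add: complex_structure_def)
  then show ?thesis
    by (simp add: blinfun.minus_left)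
qed

lemma complex_structure_skew:
  assumes "complex_structure J"
  shows "J x \<bullet> y = - (x \<bullet> J (y::'a::real_inner))"
  using complex_structure_inner[OF assms, of x "J y"]
  by (simp add: complex_structure_apply_apply[OF assms])

lemma selfadjoint_id_minus_scaleR:
  assumes "selfadjoint G"
  shows "selfadjoint (id_blinfun - c *\<^sub>R G)"
  using assms
  by (simp add: selfadjoint_def blinfun.diff_left blinfun.scaleR_left inner_diff_left
      inner_diff_right)

lemma norm_id_minus_scaleR_coercive_lt_1:
  fixes G :: "'a::real_inner \<Rightarrow>\<^sub>L 'a"
  assumes "selfadjoint G" and "0 < m" and coercive: "\<And>x. m * (x \<bullet> x) \<le> G x \<bullet> x"
  shows "norm (id_blinfun - (1 / (norm G + m)) *\<^sub>R G) < 1"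
proof -
  define M where "M = norm G + m"
  have "M > 0"
    using \<open>0 < m\<close> by (simp add: M_def add_nonneg_pos)
  let ?K = "id_blinfun - (1 / M) *\<^sub>R G"
  have K_inner: "?K x \<bullet> x = x \<bullet> x - (G x \<bullet> x) / M" for x
    by (simp add: blinfun.diff_left blinfun.scaleR_left inner_diff_left)
  have "norm ?K \<le> 1 - m / M"
  proof (rule norm_selfadjoint_nonneg_le)
    show "selfadjoint ?K"
      using \<open>selfadjoint G\<close> by (rule selfadjoint_id_minus_scaleR)
    show "0 \<le> ?K x \<bullet> x" for x
    proof -
      have "G x \<bullet> x \<le> norm (G x) * norm x"
        using Cauchy_Schwarz_ineq2[of "G x" x] by simp
      also have "\<dots> \<le> norm G * norm x * norm x"
        by (simp add: mult_right_mono norm_blinfun)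
      also have "\<dots> \<le> M * (x \<bullet> x)"
        using \<open>0 < m\<close> by (simp add: M_def dot_square_norm power2_eq_square algebra_simps)
      finally show ?thesis
        using \<open>M > 0\<close> by (simp add: K_inner field_simps)
    qed
    show "?K x \<bullet> x \<le> (1 - m / M) * (x \<bullet> x)" for x
      using coercive[of x] \<open>M > 0\<close> by (simp add: K_inner field_simps)
  qed (use \<open>M > 0\<close> in \<open>simp add: M_def\<close>)
  also have "\<dots> < 1"
    using \<open>0 < m\<close> \<open>M > 0\<close> by simp
  finally show ?thesis
    by (simp add: M_def)
qed

lemma coercive_selfadjoint_sqrt:
  fixes G :: "'a::{real_inner,complete_space} \<Rightarrow>\<^sub>L 'a"
  assumes "selfadjoint G" and "0 < m" and coercive: "\<And>x. m * (x \<bullet> x) \<le> G x \<bullet> x"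
  obtains R R' where "R o\<^sub>L R' = id_blinfun" and "R' o\<^sub>L R = id_blinfun"
    and "\<And>x. (norm (R x))\<^sup>2 = G x \<bullet> x"
    and "\<And>J. J o\<^sub>L G = G o\<^sub>L J \<Longrightarrow> J o\<^sub>L R = R o\<^sub>L J"
proof -
  interpret compose: bounded_bilinear "(o\<^sub>L) :: ('a \<Rightarrow>\<^sub>L 'a) \<Rightarrow> _"
    by (rule bounded_bilinear_blinfun_compose)
  define M where "M = norm G + m"
  have "M > 0"
    using \<open>0 < m\<close> by (simp add: M_def add_nonneg_pos)
  define K where "K = id_blinfun - (1 / M) *\<^sub>R G"
  have "selfadjoint K" "norm K < 1"
    using selfadjoint_id_minus_scaleR[OF \<open>selfadjoint G\<close>]
      norm_id_minus_scaleR_coercive_lt_1[OF assms]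
    by (simp_all add: K_def M_def)
  obtain R R' where RR: "R o\<^sub>L R = id_blinfun - K"
    and inverse: "R o\<^sub>L R' = id_blinfun" "R' o\<^sub>L R = id_blinfun"
    and "selfadjoint R" and commute: "\<And>J. J o\<^sub>L K = K o\<^sub>L J \<Longrightarrow> J o\<^sub>L R = R o\<^sub>L J"
    using selfadjoint_sqrt_id_minus[OF \<open>selfadjoint K\<close> \<open>norm K < 1\<close>] by metis
  show ?thesis
  proof (rule that[of "sqrt M *\<^sub>R R" "(1 / sqrt M) *\<^sub>R R'"])
    show "sqrt M *\<^sub>R R o\<^sub>L (1 / sqrt M) *\<^sub>R R' = id_blinfun"
      "(1 / sqrt M) *\<^sub>R R' o\<^sub>L sqrt M *\<^sub>R R = id_blinfun"
      using \<open>M > 0\<close> inverse by (simp_all add: compose.scaleR_left compose.scaleR_right)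
    have "(norm (R x))\<^sup>2 = (G x \<bullet> x) / M" for x
    proof -
      have "(norm (R x))\<^sup>2 = (R o\<^sub>L R) x \<bullet> x"
        using \<open>selfadjoint R\<close> by (simp add: selfadjoint_def power2_norm_eq_inner)
      also have "\<dots> = (G x \<bullet> x) / M"
        by (simp add: RR K_def blinfun.diff_left blinfun.scaleR_left inner_diff_left)
      finally show ?thesis .
    qed
    then show "(norm ((sqrt M *\<^sub>R R) x))\<^sup>2 = G x \<bullet> x" for x
      using \<open>M > 0\<close> by (simp add: blinfun.scaleR_left power_mult_distrib)
    show "J o\<^sub>L sqrt M *\<^sub>R R = sqrt M *\<^sub>R R o\<^sub>L J" if "J o\<^sub>L G = G o\<^sub>L J" for J
      using commute[of J] that
      by (simp add: K_def compose.diff_left compose.diff_right compose.scaleR_left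
          compose.scaleR_right)
  qed
qed

lemma complex_invariant_form_eq_norm_square:
  fixes J :: "'a::{real_inner,complete_space} \<Rightarrow>\<^sub>L 'a" and q :: "'a \<Rightarrow> 'a \<Rightarrow> real"
  assumes J: "complex_structure J" and "bounded_bilinear q"
    and symmetric: "\<And>h k. q h k = q k h"
    and J_invariant: "\<And>h k. q (J h) (J k) = q h k"
    and "0 < m" and coercive: "\<And>h. m * (norm h)\<^sup>2 \<le> q h h"
  obtains R R' where "invertible_pair J R R'" and "\<And>h. (norm (R h))\<^sup>2 = q h h"
proof -
  obtain G :: "'a \<Rightarrow>\<^sub>L 'a" where G: "\<And>h k. G h \<bullet> k = q h k"
    using bounded_bilinear_form_representation[OF \<open>bounded_bilinear q\<close>] by blast
  have "selfadjoint G"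
    by (simp add: selfadjoint_def G inner_commute[of _ "G _"] symmetric)
  have G_J: "G (J h) = J (G h)" for h
  proof -
    have "G (J h) \<bullet> k = J (G h) \<bullet> k" for k
    proof -
      have "G (J h) \<bullet> k = q (J h) (J (- J k))"
        using complex_structure_apply_apply[OF J, of k] by (simp add: G blinfun.minus_right)
      also have "\<dots> = - (G h \<bullet> J k)"
        by (simp only: J_invariant) (simp add: G[symmetric] blinfun.minus_right)
      also have "\<dots> = J (G h) \<bullet> k"
        by (simp add: complex_structure_skew[OF J])
      finally show ?thesis .
    qed
    then have "(G (J h) - J (G h)) \<bullet> (G (J h) - J (G h)) = 0"
      by (simp add: inner_diff_left)
    then show ?thesis by simp
  qed
  obtain R R' where "R o\<^sub>L R' = id_blinfun" "R' o\<^sub>L R = id_blinfun"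
    and norm_R: "\<And>x. (norm (R x))\<^sup>2 = G x \<bullet> x"
    and commute: "\<And>J. J o\<^sub>L G = G o\<^sub>L J \<Longrightarrow> J o\<^sub>L R = R o\<^sub>L J"
    using coercive_selfadjoint_sqrt[OF \<open>selfadjoint G\<close> \<open>0 < m\<close>] coercive
    by (metis G dot_square_norm)
  have "J o\<^sub>L G = G o\<^sub>L J"
    by (rule blinfun_eqI) (simp add: G_J)
  then have "invertible_pair J R R'"
    using commute \<open>R o\<^sub>L R' = id_blinfun\<close> \<open>R' o\<^sub>L R = id_blinfun\<close>
    by (simp add: invertible_pair_def complex_linear_op_def)
  then show ?thesis
    using that norm_R G by simp
qed

section \<open>C0-semigroups\<close>

lemma closed_cover_contains_ball:
  fixes F :: "nat \<Rightarrow> 'a::{real_normed_vector,complete_space} set"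
  assumes closed: "\<And>k. closed (F k)" and cover: "(\<Union>k. F k) = UNIV"
  obtains k x0 r where "r > 0" and "ball x0 r \<subseteq> F k"
proof -
  have "\<exists>k. interior (F k) \<noteq> {}"
  proof (rule ccontr)
    assume "\<nexists>k. interior (F k) \<noteq> {}"
    with closed have "euclidean interior_of \<Union>(range F) = {}"
      by (intro Baire_category_alt)
        (auto simp: completely_metrizable_space_euclidean euclidean_interior_of)
    then show False
      using cover by (simp add: euclidean_interior_of)
  qed
  then obtain k x0 where "x0 \<in> interior (F k)"
    by blast
  then obtain r where "r > 0" "ball x0 r \<subseteq> interior (F k)"
    using open_contains_ball open_interior by blast
  then have "ball x0 r \<subseteq> F k"
    using interior_subset by blast
  with \<open>r > 0\<close> show ?thesis
    by (rule that)
qed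

lemma norm_blinfun_le_if_bounded_on_ball:
  fixes A :: "'a::real_normed_vector \<Rightarrow>\<^sub>L 'b::real_normed_vector"
  assumes "r > 0" and bounded: "\<And>h. norm h < r \<Longrightarrow> norm (A h) \<le> c"
  shows "norm A \<le> 2 * c / r"
proof (rule norm_blinfun_bound)
  show "0 \<le> 2 * c / r"
    using bounded[of 0] \<open>r > 0\<close> by simp
  fix h
  show "norm (A h) \<le> 2 * c / r * norm h"
  proof (cases "h = 0")
    case False
    define s where "s = r / (2 * norm h)"
    have "s > 0" "norm (s *\<^sub>R h) < r"
      using \<open>r > 0\<close> False by (simp_all add: s_def)
    then have "s * norm (A h) \<le> c"
      using bounded[of "s *\<^sub>R h"] by (simp add: blinfun.scaleR_right)
    then show ?thesis
      using \<open>s > 0\<close> \<open>r > 0\<close> False by (simp add: s_def field_simps)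
  qed simp
qed

lemma banach_steinhaus:
  fixes A :: "'i \<Rightarrow> 'a::{real_normed_vector,complete_space} \<Rightarrow>\<^sub>L 'b::real_normed_vector"
  assumes pointwise_bounded: "\<And>h. \<exists>B. \<forall>i. norm (A i h) \<le> B"
  shows "\<exists>C. \<forall>i. norm (A i) \<le> C"
proof -
  define F where "F k = {h. \<forall>i. norm (A i h) \<le> real k}" for k :: nat
  have closed: "closed (F k)" for k
    unfolding F_def Collect_all_eq by (intro closed_INT ballI closed_Collect_le continuous_intros)
  have "h \<in> (\<Union>k. F k)" for h
  proof -
    obtain B where "\<forall>i. norm (A i h) \<le> B"
      using pointwise_bounded by blast
    moreover obtain k :: nat where "B \<le> real k"
      using real_arch_simple by blast
    ultimately show ?thesis
      by (auto simp: F_def intro: order_trans)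
  qed
  then have cover: "(\<Union>k. F k) = UNIV"
    by blast
  obtain k x0 r where "r > 0" and "ball x0 r \<subseteq> F k"
    by (rule closed_cover_contains_ball[OF closed cover])
  have small: "norm (A i h) \<le> 2 * real k" if "norm h < r" for i h
  proof -
    have "x0 + h \<in> F k" "x0 \<in> F k"
      using \<open>ball x0 r \<subseteq> F k\<close> \<open>r > 0\<close> that by (auto simp: dist_norm)
    then have "norm (A i (x0 + h)) \<le> real k" "norm (A i x0) \<le> real k"
      by (auto simp: F_def)
    then show ?thesis
      using norm_triangle_ineq4[of "A i (x0 + h)" "A i x0"] by (simp add: blinfun.add_right)
  qed
  have "norm (A i) \<le> 2 * (2 * real k) / r" for i
    by (rule norm_blinfun_le_if_bounded_on_ball[OF \<open>r > 0\<close> small])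
  then show ?thesis
    by blast
qed

lemma C0_semigroupD:
  assumes "C0_semigroup T"
  shows "T 0 = id_blinfun"
    and "\<And>s t. 0 \<le> s \<Longrightarrow> 0 \<le> t \<Longrightarrow> T (s + t) = T s o\<^sub>L T t"
    and "\<And>x. ((\<lambda>t. T t x) \<longlongrightarrow> x) (at_right 0)"
  using assms unfolding C0_semigroup_def by auto

lemma C0_semigroup_near_zero:
  assumes "C0_semigroup T" and "e > 0"
  obtains d where "d > 0" and "\<And>s. 0 \<le> s \<Longrightarrow> s < d \<Longrightarrow> norm (T s x - x) < e"
proof -
  have "eventually (\<lambda>t. dist (T t x) x < e) (at_right 0)"
    using C0_semigroupD(3)[OF assms(1)] assms(2) by (rule tendstoD)
  then obtain d where "d > 0" and d: "\<And>s. 0 < s \<Longrightarrow> s < d \<Longrightarrow> dist (T s x) x < e"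
    unfolding eventually_at_right_field by auto
  have "norm (T s x - x) < e" if "0 \<le> s" "s < d" for s
    using d[of s] that C0_semigroupD(1)[OF assms(1)] \<open>e > 0\<close>
    by (cases "s = 0") (auto simp: dist_norm)
  with \<open>d > 0\<close> show ?thesis
    using that by blast
qed

text \<open>Otherwise there are \<open>t\<^sub>n \<longrightarrow> 0\<close> with \<open>norm (T t\<^sub>n) > n\<close>, although \<open>T t\<^sub>n h \<longrightarrow> h\<close>
  for every \<open>h\<close>; this contradicts the Banach-Steinhaus theorem.\<close>

lemma C0_semigroup_locally_bounded:
  fixes T :: "real \<Rightarrow> 'a::{real_normed_vector,complete_space} \<Rightarrow>\<^sub>L 'a"
  assumes "C0_semigroup T"
  obtains d M where "d > 0" and "\<And>t. 0 \<le> t \<Longrightarrow> t \<le> d \<Longrightarrow> norm (T t) \<le> M"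
proof (rule ccontr)
  assume unbounded: "\<not> thesis"
  have "\<exists>t. 0 \<le> t \<and> t \<le> inverse (real (Suc n)) \<and> real n < norm (T t)" for n
  proof (rule ccontr)
    assume "\<not> ?thesis"
    then have "\<And>t. 0 \<le> t \<Longrightarrow> t \<le> inverse (real (Suc n)) \<Longrightarrow> norm (T t) \<le> real n"
      by (auto simp: not_less)
    then show False
      using unbounded that[of "inverse (real (Suc n))" "real n"] by simp
  qed
  then obtain t where t: "\<And>n. 0 \<le> t n" "\<And>n. t n \<le> inverse (real (Suc n))"
    "\<And>n. real n < norm (T (t n))"
    by metis
  have "\<forall>\<^sub>F n in sequentially. 0 \<le> t n" "\<forall>\<^sub>F n in sequentially. t n \<le> inverse (real (Suc n))"
    using t(1,2) by (blast intro: always_eventually)+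
  then have "t \<longlonglongrightarrow> 0"
    by (rule tendsto_sandwich[OF _ _ tendsto_const LIMSEQ_inverse_real_of_nat])
  have "\<exists>B. \<forall>n. norm (T (t n) h) \<le> B" for h
  proof -
    have "(\<lambda>n. T (t n) h) \<longlonglongrightarrow> h"
    proof (rule LIMSEQ_I)
      fix r :: real assume "r > 0"
      then obtain d where "d > 0" and d: "\<And>s. 0 \<le> s \<Longrightarrow> s < d \<Longrightarrow> norm (T s h - h) < r"
        using C0_semigroup_near_zero[OF assms] by metis
      obtain N where N: "\<And>n. n \<ge> N \<Longrightarrow> norm (t n) < d"
        using LIMSEQ_D[OF \<open>t \<longlonglongrightarrow> 0\<close> \<open>d > 0\<close>] by auto
      have "norm (T (t n) h - h) < r" if "n \<ge> N" for n
        using d[OF t(1)] N[OF that] t(1)[of n] by simp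
      then show "\<exists>N. \<forall>n\<ge>N. norm (T (t n) h - h) < r"
        by blast
    qed
    then have "Bseq (\<lambda>n. T (t n) h)"
      by (rule convergent_imp_Bseq[OF convergentI])
    then show ?thesis
      unfolding Bseq_def by (meson less_imp_le)
  qed
  then obtain C where C: "\<And>n. norm (T (t n)) \<le> C"
    using banach_steinhaus[of "\<lambda>n. T (t n)"] by blast
  obtain n :: nat where "C < real n"
    using reals_Archimedean2 by blast
  then show False
    using C[of n] t(3)[of n] by linarith
qed

lemma nonneg_real_induct:
  fixes d t :: real
  assumes "0 < d" and "0 \<le> t"
    and base: "\<And>t. 0 \<le> t \<Longrightarrow> t \<le> d \<Longrightarrow> P t"
    and step: "\<And>t. d < t \<Longrightarrow> P (t - d) \<Longrightarrow> P t"
  shows "P t"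
proof -
  have "P t" if "0 \<le> t" "t \<le> real n * d" for n t
    using that
  proof (induction n arbitrary: t)
    case 0
    then show ?case
      using base[of t] \<open>0 < d\<close> by simp
  next
    case (Suc n)
    show ?case
    proof (cases "t \<le> d")
      case True
      then show ?thesis
        using base Suc.prems(1) by blast
    next
      case False
      have "t - d \<le> real n * d"
        using Suc.prems(2) by (simp add: distrib_right)
      then have "P (t - d)"
        using False Suc.IH[of "t - d"] by simp
      then show ?thesis
        using False step[of t] by simp
    qed
  qed
  moreover obtain n :: nat where "t / d \<le> real n"
    using real_arch_simple by blast
  ultimately show ?thesis
    using \<open>0 < d\<close> \<open>0 \<le> t\<close> by (simp add: pos_divide_le_eq)
qed

lemma C0_semigroup_exponential_bound:
  fixes T :: "real \<Rightarrow> 'a::{real_normed_vector,complete_space} \<Rightarrow>\<^sub>L 'a"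
  assumes "C0_semigroup T"
  obtains M \<omega> where "0 \<le> \<omega>" and "\<And>t. 0 \<le> t \<Longrightarrow> norm (T t) \<le> M * exp (\<omega> * t)"
proof -
  obtain d M0 where "d > 0" and M0: "\<And>t. 0 \<le> t \<Longrightarrow> t \<le> d \<Longrightarrow> norm (T t) \<le> M0"
    using C0_semigroup_locally_bounded[OF assms] by metis
  define M where "M = max M0 1"
  define \<omega> where "\<omega> = ln M / d"
  have "M \<ge> 1" "0 \<le> \<omega>"
    using \<open>d > 0\<close> by (simp_all add: M_def \<omega>_def)
  have exp_\<omega>d: "exp (\<omega> * d) = M"
    using \<open>d > 0\<close> \<open>M \<ge> 1\<close> by (simp add: \<omega>_def)
  have "norm (T t) \<le> M * exp (\<omega> * t)" if "0 \<le> t" for t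
    using \<open>d > 0\<close> that
  proof (rule nonneg_real_induct[where P="\<lambda>t. norm (T t) \<le> M * exp (\<omega> * t)"])
    fix t assume "0 \<le> t" "t \<le> d"
    have "norm (T t) \<le> M * 1"
      using M0[OF \<open>0 \<le> t\<close> \<open>t \<le> d\<close>] by (simp add: M_def)
    also have "\<dots> \<le> M * exp (\<omega> * t)"
      using \<open>M \<ge> 1\<close> \<open>0 \<le> \<omega>\<close> \<open>0 \<le> t\<close> by (intro mult_left_mono) auto
    finally show "norm (T t) \<le> M * exp (\<omega> * t)" .
  next
    fix t assume "d < t" and IH: "norm (T (t - d)) \<le> M * exp (\<omega> * (t - d))"
    have "T t = T d o\<^sub>L T (t - d)"
      using C0_semigroupD(2)[OF assms, of d "t - d"] \<open>d < t\<close> \<open>d > 0\<close> by simp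
    then have "norm (T t) \<le> norm (T d) * norm (T (t - d))"
      by (simp add: norm_blinfun_compose)
    also have "\<dots> \<le> M * (M * exp (\<omega> * (t - d)))"
      using M0[of d] \<open>d > 0\<close> IH by (intro mult_mono) (auto simp: M_def)
    also have "\<dots> = M * exp (\<omega> * t)"
      by (simp add: exp_\<omega>d[symmetric] right_diff_distrib exp_diff)
    finally show "norm (T t) \<le> M * exp (\<omega> * t)" .
  qed
  with \<open>0 \<le> \<omega>\<close> show ?thesis
    using that by blast
qed

lemma C0_semigroup_bounded_on:
  fixes T :: "real \<Rightarrow> 'a::{real_normed_vector,complete_space} \<Rightarrow>\<^sub>L 'a"
  assumes "C0_semigroup T"
  obtains M where "\<And>t. 0 \<le> t \<Longrightarrow> t \<le> b \<Longrightarrow> norm (T t) \<le> M"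
proof -
  obtain M \<omega> where "0 \<le> \<omega>" and M: "\<And>t. 0 \<le> t \<Longrightarrow> norm (T t) \<le> M * exp (\<omega> * t)"
    using C0_semigroup_exponential_bound[OF assms] by metis
  have "norm (T t) \<le> \<bar>M\<bar> * exp (\<omega> * b)" if "0 \<le> t" "t \<le> b" for t
  proof -
    have "norm (T t) \<le> \<bar>M\<bar> * exp (\<omega> * t)"
      using M[OF that(1)] by (simp add: order_trans[OF _ mult_right_mono])
    also have "\<dots> \<le> \<bar>M\<bar> * exp (\<omega> * b)"
      using that \<open>0 \<le> \<omega>\<close> by (simp add: mult_left_mono)
    finally show ?thesis .
  qed
  then show ?thesis
    using that by blast
qed

lemma C0_semigroup_continuous_on:
  fixes T :: "real \<Rightarrow> 'a::{real_normed_vector,complete_space} \<Rightarrow>\<^sub>L 'a"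
  assumes "C0_semigroup T"
  shows "continuous_on {0..} (\<lambda>t. T t x)"
  unfolding continuous_on_iff
proof (intro ballI allI impI)
  fix t e :: real assume "t \<in> {0..}" "0 < e"
  obtain M where M: "\<And>s. 0 \<le> s \<Longrightarrow> s \<le> t + 1 \<Longrightarrow> norm (T s) \<le> M"
    using C0_semigroup_bounded_on[OF assms] by metis
  define M' where "M' = max M 1"
  obtain d where "d > 0" and d: "\<And>s. 0 \<le> s \<Longrightarrow> s < d \<Longrightarrow> norm (T s x - x) < e / M'"
    using C0_semigroup_near_zero[OF assms, of "e / M'"] \<open>0 < e\<close> by (auto simp: M'_def)
  have close: "dist (T v x) (T u x) < e" if "0 \<le> u" "u \<le> v" "v < u + d" "v \<le> t + 1" for u v
  proof -
    have "T v x - T u x = T u (T (v - u) x - x)"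
      using C0_semigroupD(2)[OF assms, of u "v - u"] that by (simp add: blinfun.diff_right)
    then have "norm (T v x - T u x) \<le> M' * norm (T (v - u) x - x)"
      using M[of u] that norm_blinfun[of "T u" "T (v - u) x - x"]
      by (smt (verit, best) M'_def max.cobounded1 mult_right_mono norm_ge_zero)
    also have "\<dots> < M' * (e / M')"
      using d[of "v - u"] that by (intro mult_strict_left_mono) (auto simp: M'_def)
    finally show ?thesis
      by (simp add: M'_def dist_norm)
  qed
  show "\<exists>d>0. \<forall>u\<in>{0..}. dist u t < d \<longrightarrow> dist (T u x) (T t x) < e"
  proof (intro exI[of _ "min d 1"] conjI ballI impI)
    fix u :: real assume "u \<in> {0..}" "dist u t < min d 1"
    then show "dist (T u x) (T t x) < e"
      using close[of t u] close[of u t] \<open>t \<in> {0..}\<close>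
      by (cases "t \<le> u") (auto simp: dist_real_def dist_commute)
  qed (use \<open>d > 0\<close> in simp)
qed

lemma bounded_below_compose:
  assumes "bounded_below A" and "bounded_below B"
  shows "bounded_below (A o\<^sub>L B)"
proof -
  obtain a b where "a > 0" "\<And>h. a * norm h \<le> norm (A h)" "b > 0" "\<And>h. b * norm h \<le> norm (B h)"
    using assms by (auto simp: bounded_below_def)
  then have "(a * b) * norm h \<le> norm ((A o\<^sub>L B) h)" for h
    by (metis blinfun_apply_blinfun_compose mult.assoc mult_left_mono order_trans less_imp_le)
  with \<open>a > 0\<close> \<open>b > 0\<close> show ?thesis
    unfolding bounded_below_def by (meson mult_pos_pos)
qed

lemma bounded_below_compose_right:
  assumes "bounded_below (A o\<^sub>L B)"
  shows "bounded_below B"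
proof -
  obtain c where "c > 0" and c: "\<And>h. c * norm h \<le> norm (A (B h))"
    using assms by (auto simp: bounded_below_def)
  have "c / (norm A + 1) * norm h \<le> norm (B h)" for h
  proof -
    have "c * norm h \<le> (norm A + 1) * norm (B h)"
      using c[of h] norm_blinfun[of A "B h"] by (smt (verit) mult_right_mono norm_ge_zero)
    then show ?thesis
      by (simp add: pos_divide_le_eq add_nonneg_pos mult.commute)
  qed
  with \<open>c > 0\<close> show ?thesis
    unfolding bounded_below_def by (meson add_nonneg_pos divide_pos_pos norm_ge_zero zero_less_one)
qed

lemma C0_semigroup_bounded_below:
  assumes "C0_semigroup T" and "0 < t'" and "bounded_below (T t')" and "0 \<le> t"
  shows "bounded_below (T t)"
  using \<open>0 < t'\<close> \<open>0 \<le> t\<close>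
proof (rule nonneg_real_induct[where P="\<lambda>t. bounded_below (T t)"])
  fix t assume "0 \<le> t" "t \<le> t'"
  then have "T t' = T (t' - t) o\<^sub>L T t"
    using C0_semigroupD(2)[OF assms(1), of "t' - t" t] by simp
  then show "bounded_below (T t)"
    using \<open>bounded_below (T t')\<close> bounded_below_compose_right by metis
next
  fix t assume "t' < t" "bounded_below (T (t - t'))"
  moreover have "T t = T t' o\<^sub>L T (t - t')"
    using C0_semigroupD(2)[OF assms(1), of t' "t - t'"] \<open>0 < t'\<close> \<open>t' < t\<close> by simp
  ultimately show "bounded_below (T t)"
    using \<open>bounded_below (T t')\<close> by (simp add: bounded_below_compose)
qed

lemma C0_semigroup_uniformly_bounded_below_on:
  fixes T :: "real \<Rightarrow> 'a::{real_normed_vector,complete_space} \<Rightarrow>\<^sub>L 'a"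
  assumes "C0_semigroup T" and "0 < t'" and "bounded_below (T t')"
  obtains c where "c > 0" and "\<And>t h. 0 \<le> t \<Longrightarrow> t \<le> b \<Longrightarrow> c * norm h \<le> norm (T t h)"
proof (cases "0 \<le> b")
  case True
  obtain M where M: "\<And>t. 0 \<le> t \<Longrightarrow> t \<le> b \<Longrightarrow> norm (T t) \<le> M"
    using C0_semigroup_bounded_on[OF assms(1)] by metis
  obtain c where "c > 0" and c: "\<And>h. c * norm h \<le> norm (T b h)"
    using C0_semigroup_bounded_below[OF assms True] by (auto simp: bounded_below_def)
  have "c / (\<bar>M\<bar> + 1) * norm h \<le> norm (T t h)" if "0 \<le> t" "t \<le> b" for t h
  proof -
    have "T b h = T (b - t) (T t h)"
      using C0_semigroupD(2)[OF assms(1), of "b - t" t] that by simp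
    then have "c * norm h \<le> norm (T (b - t)) * norm (T t h)"
      using c[of h] norm_blinfun[of "T (b - t)" "T t h"] by simp
    also have "\<dots> \<le> (\<bar>M\<bar> + 1) * norm (T t h)"
      using M[of "b - t"] that by (intro mult_right_mono) auto
    finally show ?thesis
      by (simp add: field_simps add_nonneg_pos)
  qed
  moreover have "c / (\<bar>M\<bar> + 1) > 0"
    using \<open>c > 0\<close> by (simp add: add_nonneg_pos)
  ultimately show ?thesis
    using that by blast
next
  case False
  then show ?thesis
    using that[of 1] by simp
qed

section \<open>Gram forms of a semigroup\<close>

text \<open>The window \<open>[s, \<tau> + s]\<close> consists of \<open>[s, \<tau>]\<close> and the translate by \<open>\<tau>\<close> of \<open>[0, s]\<close>,
  on which \<open>f\<close> has decreased.\<close>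

lemma integral_translate_le:
  fixes f :: "real \<Rightarrow> real"
  assumes cont: "continuous_on {0..} f" and "0 \<le> s" and "s \<le> \<tau>"
    and decrease: "\<And>v. 0 \<le> v \<Longrightarrow> v \<le> s \<Longrightarrow> f (v + \<tau>) \<le> f v"
  shows "integral {0..\<tau>} (\<lambda>t. f (t + s)) \<le> integral {0..\<tau>} f"
proof -
  have integrable: "f integrable_on {a..b}" if "0 \<le> a" for a b
    using that by (intro integrable_continuous_interval continuous_on_subset[OF cont]) auto
  have translate: "integral {a..b} (\<lambda>t. f (t + c)) = integral {a + c..b + c} f" for a b c
    using integral_shift_Icc_real[of a b f c] by (simp add: o_def add.commute)
  have "integral {0..\<tau>} (\<lambda>t. f (t + s)) = integral {s..\<tau>} f + integral {\<tau>..\<tau> + s} f"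
    using translate[of 0 \<tau> s] integrable[of s "\<tau> + s"] \<open>0 \<le> s\<close> \<open>s \<le> \<tau>\<close>
      Henstock_Kurzweil_Integration.integral_combine[where a=s and c=\<tau> and b="\<tau> + s" and f=f]
    by simp
  also have "integral {\<tau>..\<tau> + s} f = integral {0..s} (\<lambda>t. f (t + \<tau>))"
    using translate[of 0 s \<tau>] by (simp add: add.commute)
  also have "\<dots> \<le> integral {0..s} f"
  proof (rule integral_le)
    show "(\<lambda>t. f (t + \<tau>)) integrable_on {0..s}"
      using \<open>0 \<le> s\<close> \<open>s \<le> \<tau>\<close>
      by (intro integrable_continuous_interval continuous_on_compose2[OF cont] continuous_intros)
        auto
  qed (use integrable decrease in auto)
  also have "integral {s..\<tau>} f + integral {0..s} f = integral {0..\<tau>} f"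
    using integrable[of 0 \<tau>] \<open>0 \<le> s\<close> \<open>s \<le> \<tau>\<close>
      Henstock_Kurzweil_Integration.integral_combine[where a=0 and c=s and b=\<tau> and f=f]
    by simp
  finally show ?thesis
    by simp
qed

definition gram_form :: "(real \<Rightarrow> 'a::real_inner \<Rightarrow>\<^sub>L 'a) \<Rightarrow> real \<Rightarrow> 'a \<Rightarrow> 'a \<Rightarrow> real" where
  "gram_form A \<tau> h k = integral {0..\<tau>} (\<lambda>t. A t h \<bullet> A t k)"

lemma gram_form_commute: "gram_form A \<tau> h k = gram_form A \<tau> k h"
  by (simp add: gram_form_def inner_commute)

lemma gram_form_integrable:
  fixes A :: "real \<Rightarrow> 'a::real_inner \<Rightarrow>\<^sub>L 'a"
  assumes "\<And>h. continuous_on {0..\<tau>} (\<lambda>t. A t h)"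
  shows "(\<lambda>t. A t h \<bullet> A t k) integrable_on {0..\<tau>}"
  using assms by (intro integrable_continuous_interval continuous_on_inner)

lemma bounded_bilinear_gram_form:
  fixes A :: "real \<Rightarrow> 'a::real_inner \<Rightarrow>\<^sub>L 'a"
  assumes "0 \<le> \<tau>" and cont: "\<And>h. continuous_on {0..\<tau>} (\<lambda>t. A t h)"
    and bound: "\<And>t. 0 \<le> t \<Longrightarrow> t \<le> \<tau> \<Longrightarrow> norm (A t) \<le> M"
  shows "bounded_bilinear (gram_form A \<tau>)"
proof
  fix h h' k k' :: 'a and r :: real
  note integrable = gram_form_integrable[OF cont]
  show "gram_form A \<tau> (h + h') k = gram_form A \<tau> h k + gram_form A \<tau> h' k"
    "gram_form A \<tau> h (k + k') = gram_form A \<tau> h k + gram_form A \<tau> h k'"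
    by (simp_all add: gram_form_def blinfun.add_right inner_add_left inner_add_right integral_add
        integrable)
  show "gram_form A \<tau> (r *\<^sub>R h) k = r *\<^sub>R gram_form A \<tau> h k"
    "gram_form A \<tau> h (r *\<^sub>R k) = r *\<^sub>R gram_form A \<tau> h k"
    by (simp_all add: gram_form_def blinfun.scaleR_right)
next
  have "norm (gram_form A \<tau> h k) \<le> norm h * norm k * (M\<^sup>2 * \<tau>)" for h k
  proof -
    have "norm (A t h \<bullet> A t k) \<le> M\<^sup>2 * (norm h * norm k)" if "t \<in> {0..\<tau>}" for t
    proof -
      have "norm (A t h \<bullet> A t k) \<le> (norm (A t) * norm h) * (norm (A t) * norm k)"
        using Cauchy_Schwarz_ineq2[of "A t h" "A t k"] norm_blinfun[of "A t"]
        by (simp add: mult_mono' order_trans)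
      also have "\<dots> \<le> (M * norm h) * (M * norm k)"
      proof -
        have "norm (A t) \<le> M"
          using bound[of t] that by auto
        moreover have "0 \<le> M"
          using calculation norm_ge_zero[of "A t"] by linarith
        ultimately show ?thesis
          by (intro mult_mono mult_right_mono) auto
      qed
      finally show ?thesis
        by (simp add: power2_eq_square algebra_simps)
    qed
    then have "norm (gram_form A \<tau> h k) \<le> M\<^sup>2 * (norm h * norm k) * (\<tau> - 0)"
      unfolding gram_form_def using \<open>0 \<le> \<tau>\<close>
      by (intro integral_bound continuous_on_inner cont) auto
    then show ?thesis
      by (simp add: algebra_simps)
  qed
  then show "\<exists>K. \<forall>h k. norm (gram_form A \<tau> h k) \<le> norm h * norm k * K"
    by blast
qed

lemma gram_form_coercive:
  fixes A :: "real \<Rightarrow> 'a::real_inner \<Rightarrow>\<^sub>L 'a"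
  assumes cont: "\<And>h. continuous_on {0..\<tau>} (\<lambda>t. A t h)" and "0 \<le> c"
    and lower: "\<And>t h. 0 \<le> t \<Longrightarrow> t \<le> \<tau> \<Longrightarrow> c * norm h \<le> norm (A t h)"
  shows "\<tau> * c\<^sup>2 * (norm h)\<^sup>2 \<le> gram_form A \<tau> h h"
proof (cases "0 \<le> \<tau>")
  case True
  have "integral {0..\<tau>} (\<lambda>t. c\<^sup>2 * (norm h)\<^sup>2) \<le> gram_form A \<tau> h h"
    unfolding gram_form_def
  proof (rule integral_le)
    fix t assume "t \<in> {0..\<tau>}"
    then have "(c * norm h)\<^sup>2 \<le> (norm (A t h))\<^sup>2"
      using lower[of t h] \<open>0 \<le> c\<close> by (intro power_mono) auto
    then show "c\<^sup>2 * (norm h)\<^sup>2 \<le> A t h \<bullet> A t h"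
      by (simp add: power_mult_distrib dot_square_norm)
  qed (auto intro: gram_form_integrable cont)
  with True show ?thesis
    by (simp add: algebra_simps)
next
  case False
  then show ?thesis
    by (simp add: gram_form_def mult_nonpos_nonneg)
qed

lemma gram_form_complex_invariant:
  fixes A :: "real \<Rightarrow> 'a::real_inner \<Rightarrow>\<^sub>L 'a"
  assumes "complex_structure J" and "\<And>t. 0 \<le> t \<Longrightarrow> t \<le> \<tau> \<Longrightarrow> complex_linear_op J (A t)"
  shows "gram_form A \<tau> (J h) (J k) = gram_form A \<tau> h k"
  unfolding gram_form_def
proof (rule integral_cong)
  fix t assume "t \<in> {0..\<tau>}"
  then have "A t o\<^sub>L J = J o\<^sub>L A t"
    using assms(2) by (simp add: complex_linear_op_def)
  then have "A t (J x) = J (A t x)" for x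
    by (metis blinfun_apply_blinfun_compose)
  then show "A t (J h) \<bullet> A t (J k) = A t h \<bullet> A t k"
    by (simp add: complex_structure_inner[OF assms(1)])
qed

lemma gram_form_semigroup_window:
  fixes T :: "real \<Rightarrow> 'a::{real_inner,complete_space} \<Rightarrow>\<^sub>L 'a"
  assumes C0: "C0_semigroup T" and "0 < \<tau>" and "S' o\<^sub>L S = id_blinfun"
    and contraction: "norm (S o\<^sub>L T \<tau> o\<^sub>L S') \<le> 1" and "0 \<le> s" and "s \<le> \<tau>"
  shows "gram_form (\<lambda>t. S o\<^sub>L T t) \<tau> (T s h) (T s h) \<le> gram_form (\<lambda>t. S o\<^sub>L T t) \<tau> h h"
proof -
  define f where "f u = S (T u h) \<bullet> S (T u h)" for u
  have "gram_form (\<lambda>t. S o\<^sub>L T t) \<tau> (T s h) (T s h) = integral {0..\<tau>} (\<lambda>t. f (t + s))"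
    unfolding gram_form_def f_def
    by (intro integral_cong) (use C0_semigroupD(2)[OF C0] \<open>0 \<le> s\<close> in auto)
  also have "\<dots> \<le> integral {0..\<tau>} f"
  proof (rule integral_translate_le[OF _ \<open>0 \<le> s\<close> \<open>s \<le> \<tau>\<close>])
    show "continuous_on {0..} f"
      unfolding f_def
      by (intro continuous_on_inner blinfun.continuous_on[OF continuous_on_const]
          C0_semigroup_continuous_on[OF C0])
    fix v assume "0 \<le> v" "v \<le> s"
    have "S' (S x) = x" for x
      using \<open>S' o\<^sub>L S = id_blinfun\<close> by (metis blinfun_apply_blinfun_compose id_blinfun.rep_eq)
    then have "S (T (v + \<tau>) h) = (S o\<^sub>L T \<tau> o\<^sub>L S') (S (T v h))"
      using C0_semigroupD(2)[OF C0, of \<tau> v] \<open>0 \<le> v\<close> \<open>0 < \<tau>\<close> by (simp add: add.commute)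
    also have "norm \<dots> \<le> norm (S o\<^sub>L T \<tau> o\<^sub>L S') * norm (S (T v h))"
      by (rule norm_blinfun)
    also have "\<dots> \<le> norm (S (T v h))"
      using mult_right_mono[OF contraction norm_ge_zero] by simp
    finally show "f (v + \<tau>) \<le> f v"
      by (simp add: f_def dot_square_norm power_mono)
  qed
  also have "\<dots> = gram_form (\<lambda>t. S o\<^sub>L T t) \<tau> h h"
    by (simp add: gram_form_def f_def[abs_def])
  finally show ?thesis .
qed

lemma gram_form_semigroup_decreasing:
  fixes T :: "real \<Rightarrow> 'a::{real_inner,complete_space} \<Rightarrow>\<^sub>L 'a"
  assumes C0: "C0_semigroup T" and "0 < \<tau>" and "S' o\<^sub>L S = id_blinfun"
    and contraction: "norm (S o\<^sub>L T \<tau> o\<^sub>L S') \<le> 1" and "0 \<le> s"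
  shows "gram_form (\<lambda>t. S o\<^sub>L T t) \<tau> (T s h) (T s h) \<le> gram_form (\<lambda>t. S o\<^sub>L T t) \<tau> h h"
proof -
  let ?q = "gram_form (\<lambda>t. S o\<^sub>L T t) \<tau>"
  note window = gram_form_semigroup_window[OF C0 \<open>0 < \<tau>\<close> \<open>S' o\<^sub>L S = id_blinfun\<close> contraction]
  have "\<forall>h. ?q (T s h) (T s h) \<le> ?q h h"
    using \<open>0 < \<tau>\<close> \<open>0 \<le> s\<close>
  proof (rule nonneg_real_induct[where P="\<lambda>s. \<forall>h. ?q (T s h) (T s h) \<le> ?q h h"])
    fix s assume "0 \<le> s" "s \<le> \<tau>"
    then show "\<forall>h. ?q (T s h) (T s h) \<le> ?q h h"
      using window by blast
  next
    fix s assume "\<tau> < s" and IH: "\<forall>h. ?q (T (s - \<tau>) h) (T (s - \<tau>) h) \<le> ?q h h"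
    show "\<forall>h. ?q (T s h) (T s h) \<le> ?q h h"
    proof
      fix h
      have "T s h = T \<tau> (T (s - \<tau>) h)"
        using C0_semigroupD(2)[OF C0, of \<tau> "s - \<tau>"] \<open>\<tau> < s\<close> \<open>0 < \<tau>\<close> by simp
      then have "?q (T s h) (T s h) \<le> ?q (T (s - \<tau>) h) (T (s - \<tau>) h)"
        using window[of \<tau> "T (s - \<tau>) h"] \<open>0 < \<tau>\<close> by simp
      also have "\<dots> \<le> ?q h h"
        using IH by blast
      finally show "?q (T s h) (T s h) \<le> ?q h h" .
    qed
  qed
  then show ?thesis
    by blast
qed

lemma gram_form_semigroup_equivalent:
  fixes T :: "real \<Rightarrow> 'a::{real_inner,complete_space} \<Rightarrow>\<^sub>L 'a"
  assumes C0: "C0_semigroup T" and "0 < t'" and "bounded_below (T t')"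
    and "0 < \<tau>" and S: "S' o\<^sub>L S = id_blinfun"
  shows "bounded_bilinear (gram_form (\<lambda>t. S o\<^sub>L T t) \<tau>)"
    and "\<exists>m>0. \<forall>h. m * (norm h)\<^sup>2 \<le> gram_form (\<lambda>t. S o\<^sub>L T t) \<tau> h h"
proof -
  let ?A = "\<lambda>t. S o\<^sub>L T t"
  have cont: "continuous_on {0..\<tau>} (\<lambda>t. ?A t h)" for h
    by (auto intro!: blinfun.continuous_on[OF continuous_on_const]
        continuous_on_subset[OF C0_semigroup_continuous_on[OF C0]])
  obtain M where M: "\<And>t. 0 \<le> t \<Longrightarrow> t \<le> \<tau> \<Longrightarrow> norm (T t) \<le> M"
    using C0_semigroup_bounded_on[OF C0] by metis
  show "bounded_bilinear (gram_form ?A \<tau>)"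
    using \<open>0 < \<tau>\<close> cont M
    by (intro bounded_bilinear_gram_form[where M="norm S * M"])
      (auto intro!: order_trans[OF norm_blinfun_compose] mult_left_mono)
  obtain c where "c > 0" and c: "\<And>t h. 0 \<le> t \<Longrightarrow> t \<le> \<tau> \<Longrightarrow> c * norm h \<le> norm (T t h)"
    using C0_semigroup_uniformly_bounded_below_on[OF C0 \<open>0 < t'\<close> \<open>bounded_below (T t')\<close>] by metis
  define c' where "c' = c / (norm S' + 1)"
  have "c' > 0"
    using \<open>c > 0\<close> by (simp add: c'_def add_nonneg_pos)
  have "c' * norm h \<le> norm (?A t h)" if "0 \<le> t" "t \<le> \<tau>" for t h
  proof -
    have "c * norm h \<le> norm (S' (?A t h))"
      using c[OF that] S by (metis blinfun_apply_blinfun_compose id_blinfun.rep_eq)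
    also have "\<dots> \<le> (norm S' + 1) * norm (?A t h)"
      using norm_blinfun[of S' "?A t h"] norm_ge_zero[of "?A t h"]
      by (simp only: distrib_right mult_1_left)
    finally show ?thesis
      by (simp add: c'_def pos_divide_le_eq add_nonneg_pos mult.commute)
  qed
  then have "(\<tau> * c'\<^sup>2) * (norm h)\<^sup>2 \<le> gram_form ?A \<tau> h h" for h
    using cont \<open>c' > 0\<close> by (intro gram_form_coercive) auto
  moreover have "0 < \<tau> * c'\<^sup>2"
    using \<open>0 < \<tau>\<close> \<open>c' > 0\<close> by simp
  ultimately show "\<exists>m>0. \<forall>h. m * (norm h)\<^sup>2 \<le> gram_form ?A \<tau> h h"
    by blast
qed

lemma similar_to_contraction_semigroupI:
  fixes R R' :: "'a::real_normed_vector \<Rightarrow>\<^sub>L 'a" and T :: "real \<Rightarrow> 'a \<Rightarrow>\<^sub>L 'a"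
  assumes "invertible_pair J R R'" and "\<And>t h. 0 \<le> t \<Longrightarrow> norm (R (T t h)) \<le> norm (R h)"
  shows "similar_to_contraction_semigroup J T"
  unfolding similar_to_contraction_semigroup_def
proof (intro exI conjI allI impI)
  fix t :: real assume "0 \<le> t"
  have RR': "R (R' x) = x" for x
    using assms(1) by (metis blinfun_apply_blinfun_compose id_blinfun.rep_eq invertible_pair_def)
  show "norm (R o\<^sub>L T t o\<^sub>L R') \<le> 1"
  proof (rule norm_blinfun_bound)
    show "norm ((R o\<^sub>L T t o\<^sub>L R') x) \<le> 1 * norm x" for x
      using assms(2)[OF \<open>0 \<le> t\<close>, of "R' x"] by (simp add: RR')
  qed simp
qed (fact assms(1))

lemma similar_to_contraction_semigroup_if_similar_to_contraction:
  fixes J :: "'a::{real_inner,complete_space} \<Rightarrow>\<^sub>L 'a" and T :: "real \<Rightarrow> 'a \<Rightarrow>\<^sub>L 'a"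
  assumes J: "complex_structure J" and linear: "\<forall>t\<ge>0. complex_linear_op J (T t)"
    and C0: "C0_semigroup T" and "0 < t'" and "bounded_below (T t')"
    and "0 < \<tau>" and "similar_to_contraction J (T \<tau>)"
  shows "similar_to_contraction_semigroup J T"
proof -
  obtain S S' where "invertible_pair J S S'" and contraction: "norm (S o\<^sub>L T \<tau> o\<^sub>L S') \<le> 1"
    using \<open>similar_to_contraction J (T \<tau>)\<close> by (auto simp: similar_to_contraction_def)
  then have S: "S o\<^sub>L J = J o\<^sub>L S" "S' o\<^sub>L S = id_blinfun"
    by (simp_all add: invertible_pair_def complex_linear_op_def)
  let ?q = "gram_form (\<lambda>t. S o\<^sub>L T t) \<tau>"
  have "complex_linear_op J (S o\<^sub>L T t)" if "0 \<le> t" for t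
  proof -
    have "T t o\<^sub>L J = J o\<^sub>L T t"
      using linear that by (simp add: complex_linear_op_def)
    then have "S o\<^sub>L T t o\<^sub>L J = S o\<^sub>L J o\<^sub>L T t"
      by (simp add: blinfun_compose_assoc)
    then show ?thesis
      by (simp add: complex_linear_op_def S(1) blinfun_compose_assoc)
  qed
  then have invariant: "?q (J h) (J k) = ?q h k" for h k
    using J by (intro gram_form_complex_invariant) auto
  obtain m where "m > 0" and coercive: "\<And>h. m * (norm h)\<^sup>2 \<le> ?q h h"
    using gram_form_semigroup_equivalent(2)[OF C0 \<open>0 < t'\<close> \<open>bounded_below (T t')\<close> \<open>0 < \<tau>\<close> S(2)]
    by blast
  obtain R R' where "invertible_pair J R R'" and R: "\<And>h. (norm (R h))\<^sup>2 = ?q h h"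
    using complex_invariant_form_eq_norm_square[OF J gram_form_semigroup_equivalent(1)
        [OF C0 \<open>0 < t'\<close> \<open>bounded_below (T t')\<close> \<open>0 < \<tau>\<close> S(2)] gram_form_commute invariant
        \<open>m > 0\<close> coercive]
    by blast
  have "norm (R (T t h)) \<le> norm (R h)" if "0 \<le> t" for t h
    using gram_form_semigroup_decreasing[OF C0 \<open>0 < \<tau>\<close> S(2) contraction that]
    by (simp add: R[symmetric])
  then show ?thesis
    using \<open>invertible_pair J R R'\<close> by (rule similar_to_contraction_semigroupI[rotated])
qed

lemma C0_semigroup_rescale:
  assumes "C0_semigroup T"
  shows "C0_semigroup (\<lambda>t. exp (w * t) *\<^sub>R T t)"
  unfolding C0_semigroup_def
proof (intro conjI allI impI)
  show "exp (w * 0) *\<^sub>R T 0 = id_blinfun"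
    using C0_semigroupD(1)[OF assms] by simp
  show "exp (w * (s + t)) *\<^sub>R T (s + t) = exp (w * s) *\<^sub>R T s o\<^sub>L exp (w * t) *\<^sub>R T t"
    if "0 \<le> s" "0 \<le> t" for s t
    using C0_semigroupD(2)[OF assms that]
    by (simp add: blinfun_compose_scaleR distrib_left exp_add)
  show "((\<lambda>t. (exp (w * t) *\<^sub>R T t) x) \<longlongrightarrow> x) (at_right 0)" for x
  proof -
    have "((\<lambda>t. exp (w * t)) \<longlongrightarrow> exp (w * 0)) (at_right 0)"
      by (intro tendsto_intros)
    then have "((\<lambda>t. exp (w * t) *\<^sub>R T t x) \<longlongrightarrow> 1 *\<^sub>R x) (at_right 0)"
      using C0_semigroupD(3)[OF assms, of x] by (intro tendsto_scaleR) auto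
    then show ?thesis
      by (simp add: blinfun.scaleR_left)
  qed
qed

lemma complex_linear_op_scaleR:
  assumes "complex_linear_op J A"
  shows "complex_linear_op J (c *\<^sub>R A)"
  using assms by (simp add: complex_linear_op_def blinfun_compose_scaleR)

lemma bounded_below_scaleR:
  assumes "bounded_below A" and "c \<noteq> 0"
  shows "bounded_below (c *\<^sub>R A)"
proof -
  obtain b where "b > 0" and b: "\<And>h. b * norm h \<le> norm (A h)"
    using assms(1) by (auto simp: bounded_below_def)
  have "(\<bar>c\<bar> * b) * norm h \<le> norm ((c *\<^sub>R A) h)" for h
    using mult_left_mono[OF b[of h], of "\<bar>c\<bar>"] by (simp add: blinfun.scaleR_left mult.assoc)
  moreover have "\<bar>c\<bar> * b > 0"
    using \<open>b > 0\<close> \<open>c \<noteq> 0\<close> by simp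
  ultimately show ?thesis
    unfolding bounded_below_def by blast
qed

lemma similar_to_quasi_contraction_semigroup:
  fixes J :: "'a::{real_inner,complete_space} \<Rightarrow>\<^sub>L 'a" and T :: "real \<Rightarrow> 'a \<Rightarrow>\<^sub>L 'a"
  assumes J: "complex_structure J" and linear: "\<forall>t\<ge>0. complex_linear_op J (T t)"
    and C0: "C0_semigroup T" and "0 < t'" and "bounded_below (T t')"
  shows "similar_to_quasi_contraction_semigroup J T"
proof -
  define w where "w = ln (norm (T 1) + 1)"
  define T' where "T' t = exp (- w * t) *\<^sub>R T t" for t
  have "norm (T' 1) = norm (T 1) / (norm (T 1) + 1)"
    by (simp add: T'_def w_def exp_minus add_nonneg_pos divide_inverse_commute)
  then have "norm (T' 1) \<le> 1"
    by (simp add: add_nonneg_pos)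
  then have contraction: "similar_to_contraction J (T' 1)"
    unfolding similar_to_contraction_def invertible_pair_def complex_linear_op_def
    by (intro exI[of _ id_blinfun] conjI) simp_all
  have C0': "C0_semigroup T'"
    unfolding T'_def[abs_def] using C0 by (rule C0_semigroup_rescale)
  have linear': "\<forall>t\<ge>0. complex_linear_op J (T' t)"
    using linear by (simp add: T'_def complex_linear_op_scaleR)
  have bounded_below': "bounded_below (T' t')"
    unfolding T'_def using \<open>bounded_below (T t')\<close> by (rule bounded_below_scaleR) simp
  have "similar_to_contraction_semigroup J T'"
    by (rule similar_to_contraction_semigroup_if_similar_to_contraction
        [OF J linear' C0' \<open>0 < t'\<close> bounded_below' zero_less_one contraction])
  then obtain R R' where "invertible_pair J R R'"
    and R: "\<And>t. 0 \<le> t \<Longrightarrow> norm (R o\<^sub>L T' t o\<^sub>L R') \<le> 1"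
    by (auto simp: similar_to_contraction_semigroup_def)
  have "norm (R o\<^sub>L T t o\<^sub>L R') \<le> exp (w * t)" if "0 \<le> t" for t
  proof -
    have "R o\<^sub>L T t o\<^sub>L R' = exp (w * t) *\<^sub>R (R o\<^sub>L T' t o\<^sub>L R')"
      by (simp add: T'_def exp_minus blinfun_compose_scaleR)
    then show ?thesis
      using R[OF that] by (simp add: mult_left_le)
  qed
  then show ?thesis
    unfolding similar_to_quasi_contraction_semigroup_def using \<open>invertible_pair J R R'\<close> by blast
qed

theorem proposition4p11:
  fixes J :: "'a::{real_inner,complete_space} \<Rightarrow>\<^sub>L 'a"
    and T :: "real \<Rightarrow> ('a \<Rightarrow>\<^sub>L 'a)"
    and t' :: real
  assumes "complex_structure J"
    and "\<forall>t\<ge>0. complex_linear_op J (T t)"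
    and "C0_semigroup T"
    and "t' > 0" and "bounded_below (T t')"
  shows "(similar_to_contraction_semigroup J T \<longleftrightarrow> (\<exists>\<tau>>0. similar_to_contraction J (T \<tau>)))
         \<and> similar_to_quasi_contraction_semigroup J T"
proof (intro conjI iffI)
  assume "similar_to_contraction_semigroup J T"
  then show "\<exists>\<tau>>0. similar_to_contraction J (T \<tau>)"
    unfolding similar_to_contraction_semigroup_def similar_to_contraction_def
    by (intro exI[of _ 1]) (auto intro: zero_le_one)
next
  assume "\<exists>\<tau>>0. similar_to_contraction J (T \<tau>)"
  then show "similar_to_contraction_semigroup J T"
    using similar_to_contraction_semigroup_if_similar_to_contraction[OF assms] by blast
next
  show "similar_to_quasi_contraction_semigroup J T"
    using assms by (rule similar_to_quasi_contraction_semigroup)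
qed

end
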